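(* Let $G$, $\varkappa$, $\mathcal K=\mathcal K(G,\varkappa)$ and let $\succ$ be any hereditary ordering of $\mathcal K$ produced by the construction described in the context. Let $\rho\in\mathcal K$, $\rho\ne\emptyset$, let $v\in\mathbb V_\rho$, and suppose $\mathbb V_\rho(v)\ne\emptyset$. Then there is a vertex $u\in\mathbb V_\rho(v)$ such that $|g_{wz}-1|\le|g_{uv}-1|$ for all $w,z\in\mathbb V_\rho(v)\cup\{v\}$.
   Context: $G=(g_{uv})_{1\le u,v\le m}$ is a symmetric complex matrix with units on the diagonal and $\varkappa>0$. $\Gamma(G,\varkappa)$ is the graph on $[m]=\{1,\dots,m\}$ with $\{u,v\}$ an edge iff $|g_{uv}-1|<\varkappa$, and $\mathcal K=\mathcal K(G,\varkappa)$ is its clique complex. For a strict total ordering $\succ$ of $\mathcal K$ and non-empty $\sigma$, $\mu(\sigma)$ is the $\succ$-largest facet of $\sigma$. Construction of $\succ$: simplices of larger dimension are larger; vertices are ordered arbitrarily; assuming $\succ$ is defined on $(s-1)$-simplices, for $s$-simplices put $\sigma\succ\tau$ if $\mu(\sigma)\succ\mu(\tau)$; for each $(s-1)$-simplex $\rho$, let $\mathbb V_\rho$ be the set of vertices $v\notin\rho$ with $\rho\cup\{v\}\in\mathcal K$ and $\mu(\rho\cup\{v\})=\rho$, $t=|\mathbb V_\rho|$; choose $v_1,\dots,v_t$ successively: for $j<t$, among pairs $w\ne z$ in $\mathbb V_\rho\setminus\{v_1,\dots,v_{j-1}\}$ pick a pair $(w^0,z^0)$ maximizing $|g_{wz}-1|$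 (ties broken arbitrarily) and set $v_j=w^0$; $v_t$ is the remaining vertex; then put $\rho\cup\{v_1\}\succ\rho\cup\{v_2\}\succ\dots\succ\rho\cup\{v_t\}$. For $v\in\mathbb V_\rho$, $\mathbb V_\rho(v)$ is the set of $u\in\mathbb V_\rho$ with $\rho\cup\{v\}\succ\rho\cup\{u\}$. *)

theory Defs
  imports Complex_Main
begin

text \<open>Vertices are the natural numbers 1..m; the matrix G is a function nat => nat => complex.
  The ordering is a binary relation gt on vertex sets, gt a b meaning a is larger than b.\<close>

definition clique_complex :: "(nat \<Rightarrow> nat \<Rightarrow> complex) \<Rightarrow> real \<Rightarrow> nat \<Rightarrow> nat set set" where
  "clique_complex G kappa m =
     {\<sigma>. \<sigma> \<subseteq> {1..m} \<and> (\<forall>u\<in>\<sigma>. \<forall>v\<in>\<sigma>. u \<noteq> v \<longrightarrow> cmod (G u v - 1) < kappa)}"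

definition facets :: "nat set \<Rightarrow> nat set set" where
  "facets \<sigma> = {\<sigma> - {x} | x. x \<in> \<sigma>}"

definition mu :: "(nat set \<Rightarrow> nat set \<Rightarrow> bool) \<Rightarrow> nat set \<Rightarrow> nat set" where
  "mu gt \<sigma> = (THE \<tau>. \<tau> \<in> facets \<sigma> \<and> (\<forall>\<tau>'\<in>facets \<sigma>. \<tau>' \<noteq> \<tau> \<longrightarrow> gt \<tau> \<tau>'))"

definition Vrho :: "(nat \<Rightarrow> nat \<Rightarrow> complex) \<Rightarrow> real \<Rightarrow> nat \<Rightarrow> (nat set \<Rightarrow> nat set \<Rightarrow> bool)
    \<Rightarrow> nat set \<Rightarrow> nat set" where
  "Vrho G kappa m gt \<rho> =
     {v. v \<notin> \<rho> \<and> insert v \<rho> \<in> clique_complex G kappa m \<and> mu gt (insert v \<rho>) = \<rho>}"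

definition Vrho_below :: "(nat \<Rightarrow> nat \<Rightarrow> complex) \<Rightarrow> real \<Rightarrow> nat \<Rightarrow> (nat set \<Rightarrow> nat set \<Rightarrow> bool)
    \<Rightarrow> nat set \<Rightarrow> nat \<Rightarrow> nat set" where
  "Vrho_below G kappa m gt \<rho> v =
     {u \<in> Vrho G kappa m gt \<rho>. gt (insert v \<rho>) (insert u \<rho>)}"

definition constructed_order :: "(nat \<Rightarrow> nat \<Rightarrow> complex) \<Rightarrow> real \<Rightarrow> nat
    \<Rightarrow> (nat set \<Rightarrow> nat set \<Rightarrow> bool) \<Rightarrow> bool" where
  "constructed_order G kappa m gt \<longleftrightarrow>
     (let K = clique_complex G kappa m in
     \<comment> \<open>strict total ordering of K\<close>
     (\<forall>\<sigma> \<tau>. gt \<sigma> \<tau> \<longrightarrow> \<sigma> \<in> K \<and> \<tau> \<in> K) \<and>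
     (\<forall>\<sigma>. \<not> gt \<sigma> \<sigma>) \<and>
     (\<forall>\<sigma> \<tau> \<upsilon>. gt \<sigma> \<tau> \<longrightarrow> gt \<tau> \<upsilon> \<longrightarrow> gt \<sigma> \<upsilon>) \<and>
     (\<forall>\<sigma>\<in>K. \<forall>\<tau>\<in>K. \<sigma> \<noteq> \<tau> \<longrightarrow> gt \<sigma> \<tau> \<or> gt \<tau> \<sigma>) \<and>
     \<comment> \<open>simplices of larger dimension are larger\<close>
     (\<forall>\<sigma>\<in>K. \<forall>\<tau>\<in>K. card \<sigma> > card \<tau> \<longrightarrow> gt \<sigma> \<tau>) \<and>
     \<comment> \<open>s-simplices, s >= 1, compared via their largest facets\<close>
     (\<forall>\<sigma>\<in>K. \<forall>\<tau>\<in>K. card \<sigma> = card \<tau> \<longrightarrow> card \<sigma> \<ge> 2 \<longrightarrow>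
         gt (mu gt \<sigma>) (mu gt \<tau>) \<longrightarrow> gt \<sigma> \<tau>) \<and>
     \<comment> \<open>greedy ordering of the cofaces rho+v with mu(rho+v) = rho\<close>
     (\<forall>\<rho>\<in>K. \<rho> \<noteq> {} \<longrightarrow>
        (\<exists>vs. distinct vs \<and> set vs = Vrho G kappa m gt \<rho> \<and>
           (\<forall>j. j + 1 < length vs \<longrightarrow>
              (\<exists>z\<in>set (drop j vs). z \<noteq> vs ! j \<and>
                 (\<forall>w\<in>set (drop j vs). \<forall>z'\<in>set (drop j vs). w \<noteq> z' \<longrightarrow>
                    cmod (G w z' - 1) \<le> cmod (G (vs ! j) z - 1)))) \<and>
           (\<forall>i j. i < j \<longrightarrow> j < length vs \<longrightarrow>
              gt (insert (vs ! i) \<rho>) (insert (vs ! j) \<rho>)))))"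

end

theory Submission
  imports Defs
begin

text \<open>The construction lists \<open>V\<^sub>\<rho>\<close> as \<open>v\<^sub>1, \<dots>, v\<^sub>t\<close> with \<open>\<rho> \<union> {v\<^sub>i}\<close> decreasing, so if
  \<open>v = v\<^sub>j\<close> then \<open>V\<^sub>\<rho>(v)\<close> is exactly the tail \<open>{v\<^sub>j\<^sub>+\<^sub>1, \<dots>, v\<^sub>t}\<close>. When this tail is non-empty,
  \<open>v\<^sub>j\<close> was chosen greedily together with a partner \<open>u\<close> from it for which \<open>|g\<^sub>u\<^sub>v - 1|\<close> is
  maximal among all pairs of distinct vertices of \<open>v\<^sub>j, \<dots>, v\<^sub>t\<close>; pairs \<open>w = z\<close> contribute
  \<open>|g\<^sub>w\<^sub>w - 1| = 0\<close>.\<close>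

lemma sorted_wrt_asym_successors:
  assumes sorted: "sorted_wrt r xs" and asym: "\<And>x y. r x y \<Longrightarrow> \<not> r y x"
    and j: "j < length xs"
  shows "{y \<in> set xs. r (xs ! j) y} = set (drop (Suc j) xs)"
proof -
  have split: "xs = take j xs @ xs ! j # drop (Suc j) xs"
    using j by (simp add: id_take_nth_drop)
  then have "sorted_wrt r (take j xs @ xs ! j # drop (Suc j) xs)"
    using sorted by simp
  then have above: "\<And>y. y \<in> set (take j xs) \<Longrightarrow> r y (xs ! j)"
    and below: "\<And>y. y \<in> set (drop (Suc j) xs) \<Longrightarrow> r (xs ! j) y"
    by (simp_all add: sorted_wrt_append)
  have "set xs = set (take j xs) \<union> {xs ! j} \<union> set (drop (Suc j) xs)"
    by (subst split) auto
  then show ?thesis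
    using above below asym by blast
qed

lemma constructed_order_asym:
  assumes "constructed_order G kappa m gt" and "gt a b"
  shows "\<not> gt b a"
proof -
  note clauses = assms(1)[unfolded constructed_order_def Let_def, THEN conjunct2]
  have "\<not> gt a a" and "gt b a \<Longrightarrow> gt a a"
    using clauses[THEN conjunct1] clauses[THEN conjunct2, THEN conjunct1] assms(2) by blast+
  then show ?thesis
    by blast
qed

lemma constructed_order_greedy_list:
  assumes "constructed_order G kappa m gt"
    and "\<rho> \<in> clique_complex G kappa m" and "\<rho> \<noteq> {}"
  obtains vs where "set vs = Vrho G kappa m gt \<rho>"
    and "sorted_wrt (\<lambda>a b. gt (insert a \<rho>) (insert b \<rho>)) vs"
    and "\<And>j. Suc j < length vs \<Longrightarrow> \<exists>u\<in>set (drop (Suc j) vs).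
           \<forall>w\<in>set (drop j vs). \<forall>z\<in>set (drop j vs). w \<noteq> z \<longrightarrow>
             cmod (G w z - 1) \<le> cmod (G (vs ! j) u - 1)"
proof -
  obtain vs where set_vs: "set vs = Vrho G kappa m gt \<rho>"
    and greedy: "\<forall>j. j + 1 < length vs \<longrightarrow>
       (\<exists>u\<in>set (drop j vs). u \<noteq> vs ! j \<and>
         (\<forall>w\<in>set (drop j vs). \<forall>z\<in>set (drop j vs). w \<noteq> z \<longrightarrow>
            cmod (G w z - 1) \<le> cmod (G (vs ! j) u - 1)))"
    and decreasing: "\<forall>i j. i < j \<longrightarrow> j < length vs \<longrightarrow>
       gt (insert (vs ! i) \<rho>) (insert (vs ! j) \<rho>)"
    using assms(1)[unfolded constructed_order_def Let_def, THEN conjunct2, THEN conjunct2,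
        THEN conjunct2, THEN conjunct2, THEN conjunct2, THEN conjunct2, rule_format, OF assms(2,3)]
    by (elim exE conjE)
  have "\<exists>u\<in>set (drop (Suc j) vs).
      \<forall>w\<in>set (drop j vs). \<forall>z\<in>set (drop j vs). w \<noteq> z \<longrightarrow>
        cmod (G w z - 1) \<le> cmod (G (vs ! j) u - 1)" if j: "Suc j < length vs" for j
  proof -
    obtain u where "u \<in> set (drop j vs)" "u \<noteq> vs ! j"
      and "\<forall>w\<in>set (drop j vs). \<forall>z\<in>set (drop j vs). w \<noteq> z \<longrightarrow>
         cmod (G w z - 1) \<le> cmod (G (vs ! j) u - 1)"
      using greedy j by auto
    moreover have "set (drop j vs) = insert (vs ! j) (set (drop (Suc j) vs))"
      using j by (metis Cons_nth_drop_Suc Suc_lessD list.set(2))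
    ultimately show ?thesis
      by blast
  qed
  moreover have "sorted_wrt (\<lambda>a b. gt (insert a \<rho>) (insert b \<rho>)) vs"
    using decreasing unfolding sorted_wrt_iff_nth_less by blast
  ultimately show thesis
    using that set_vs by blast
qed

lemma Vrho_subset_vertices: "Vrho G kappa m gt \<rho> \<subseteq> {1..m}"
  unfolding Vrho_def clique_complex_def by auto

lemma Vrho_below_eq_set_drop:
  assumes "constructed_order G kappa m gt"
    and "set vs = Vrho G kappa m gt \<rho>"
    and "sorted_wrt (\<lambda>a b. gt (insert a \<rho>) (insert b \<rho>)) vs"
    and "j < length vs"
  shows "Vrho_below G kappa m gt \<rho> (vs ! j) = set (drop (Suc j) vs)"
  using sorted_wrt_asym_successors[OF assms(3) constructed_order_asym[OF assms(1)] assms(4)]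
    assms(2)
  unfolding Vrho_below_def by simp

theorem lemma8:
  fixes G :: "nat \<Rightarrow> nat \<Rightarrow> complex" and kappa :: real and m :: nat
    and gt :: "nat set \<Rightarrow> nat set \<Rightarrow> bool" and \<rho> :: "nat set" and v :: nat
  assumes "kappa > 0"
    and "\<forall>u\<in>{1..m}. G u u = 1"
    and "\<forall>u\<in>{1..m}. \<forall>w\<in>{1..m}. G u w = G w u"
    and "constructed_order G kappa m gt"
    and "\<rho> \<in> clique_complex G kappa m" and "\<rho> \<noteq> {}"
    and "v \<in> Vrho G kappa m gt \<rho>"
    and "Vrho_below G kappa m gt \<rho> v \<noteq> {}"
  shows "\<exists>u\<in>Vrho_below G kappa m gt \<rho> v.
           \<forall>w\<in>insert v (Vrho_below G kappa m gt \<rho> v).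
           \<forall>z\<in>insert v (Vrho_below G kappa m gt \<rho> v).
             cmod (G w z - 1) \<le> cmod (G u v - 1)"
proof -
  let ?B = "Vrho_below G kappa m gt \<rho> v"
  obtain vs where set_vs: "set vs = Vrho G kappa m gt \<rho>"
    and sorted: "sorted_wrt (\<lambda>a b. gt (insert a \<rho>) (insert b \<rho>)) vs"
    and greedy: "\<And>j. Suc j < length vs \<Longrightarrow> \<exists>u\<in>set (drop (Suc j) vs).
       \<forall>w\<in>set (drop j vs). \<forall>z\<in>set (drop j vs). w \<noteq> z \<longrightarrow>
         cmod (G w z - 1) \<le> cmod (G (vs ! j) u - 1)"
    using constructed_order_greedy_list[OF assms(4-6)] by blast
  obtain j where j: "j < length vs" "vs ! j = v"
    using assms(7) set_vs by (metis in_set_conv_nth)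
  have below: "?B = set (drop (Suc j) vs)"
    using Vrho_below_eq_set_drop[OF assms(4) set_vs sorted j(1)] j(2) by simp
  then have long: "Suc j < length vs"
    using assms(8) by (cases "Suc j < length vs") auto
  have tail: "set (drop j vs) = insert v ?B"
    using below j by (metis Cons_nth_drop_Suc list.set(2))
  obtain u where u: "u \<in> ?B" and max: "\<forall>w\<in>insert v ?B. \<forall>z\<in>insert v ?B.
      w \<noteq> z \<longrightarrow> cmod (G w z - 1) \<le> cmod (G v u - 1)"
    using greedy[OF long] unfolding j(2) tail below[symmetric] by blast
  have vertices: "insert v ?B \<subseteq> {1..m}"
    using assms(7) Vrho_subset_vertices unfolding Vrho_below_def by blast
  then have "G u v = G v u"
    using assms(3) u by blast
  moreover have "cmod (G w w - 1) = 0" if "w \<in> insert v ?B" for w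
    using assms(2) vertices that by auto
  ultimately show ?thesis
    using u max by (metis norm_ge_zero)
qed

end
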